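(* Let $s\ge0$ and let $V_1,\ldots,V_n$ be vector subspaces of a finite-dimensional real vector space, each $V_i$ with a fixed generating set $\{v^i_1,\ldots,v^i_{m_i}\}$. Consider the polyhedron $$P=\Big\{(d_1,\ldots,d_n)\in\mathbb R^n:\ d_1\ge0,\ldots,d_n\ge0,\ \sum_{i\in I}d_i+\dim\Big(\sum_{i\in I^c}V_i\Big)\ge s\ \text{for all } I\subset\{1,\ldots,n\}\Big\}.$$ Then every vertex of $P$ is of the form $\widehat J(i)$ for some $(J,i)\in\overline{\mathbb J}$.
   Context: $I^c=\{1,\ldots,n\}\setminus I$; $\sum_{i\in\emptyset}d_i=0$ and the empty sum of subspaces is $\{0\}$. $\mathbb J$ is the family of all tuples $J=(\mathrm j_1,\ldots,\mathrm j_n)$ with $\mathrm j_i\subset\{v^i_1,\ldots,v^i_{m_i}\}$ such that the family formed by all elements of $\mathrm j_1,\ldots,\mathrm j_n$ taken together is linearly independent and $\#\mathrm j_1+\cdots+\#\mathrm j_n\ge s$. For $J\in\mathbb J$, $i\in\{1,\ldots,n\}$, $\widehat J(i)=(\#\mathrm j_1,\ldots,\#\mathrm j_n)+(s-(\#\mathrm j_1+\cdots+\#\mathrm j_n))e_i$ with $e_i$ the canonical basis of $\mathbb R^n$, and $\overline{\mathbb J}=\{(J,i): J\in\mathbb J,\ \widehat J(i)\ge 0 \text{ coordinatewise}\}$. *)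

theory Defs
  imports "HOL-Analysis.Analysis"
begin

definition subspace_sum :: "('n \<Rightarrow> 'a::real_vector set) \<Rightarrow> 'n set \<Rightarrow> 'a set" where
  "subspace_sum V I = {x. \<exists>f. (\<forall>i\<in>I. f i \<in> V i) \<and> x = (\<Sum>i\<in>I. f i)}"

definition polyP :: "real \<Rightarrow> ('n::finite \<Rightarrow> 'a::euclidean_space set) \<Rightarrow> (real^'n) set" where
  "polyP s V = {d. (\<forall>i. d $ i \<ge> 0) \<and>
     (\<forall>I. (\<Sum>i\<in>I. d $ i) + real (dim (subspace_sum V (- I))) \<ge> s)}"

(* The family \<J>: J i is a subset of the i-th generating set G i; the family formed by all
   elements of J 1, ..., J n taken together (as a disjoint union) is linearly independent,
   and the total number of elements is at least s. *)
definition JJ :: "real \<Rightarrow> ('n::finite \<Rightarrow> 'a::euclidean_space set) \<Rightarrow> ('n \<Rightarrow> 'a set) set" where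
  "JJ s G = {J. (\<forall>i. J i \<subseteq> G i) \<and>
     inj_on snd (SIGMA i:UNIV. J i) \<and> independent (\<Union>i. J i) \<and>
     real (\<Sum>i\<in>UNIV. card (J i)) \<ge> s}"

definition Jhat :: "real \<Rightarrow> ('n::finite \<Rightarrow> 'a set) \<Rightarrow> 'n \<Rightarrow> real^'n" where
  "Jhat s J i = (\<chi> k. real (card (J k)) +
      (if k = i then s - real (\<Sum>l\<in>UNIV. card (J l)) else 0))"

definition JJbar :: "real \<Rightarrow> ('n::finite \<Rightarrow> 'a::euclidean_space set) \<Rightarrow> (('n \<Rightarrow> 'a set) \<times> 'n) set" where
  "JJbar s G = {(J, i). J \<in> JJ s G \<and> (\<forall>k. Jhat s J i $ k \<ge> 0)}"

end

theory Submission
  imports Defs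
begin

(* Write rank(X) for the dimension of the span of the generators of the blocks
   indexed by X, so that d lies in P iff d >= 0 and d(I) + rank(-I) >= s for all I.  The rank
   function is submodular, hence so is the slack of these constraints.  At a vertex d:
   (1) every direction preserving all tight constraints vanishes;
   (2) with e_i this shows that the support of d is covered by tight constraints, whence the
       total mass of d is s and d(T) <= rank(T) for all T; the tight constraints are then the
       complements of the saturated sets T, those with d(T) = rank(T);
   (3) with e_i - e_j it shows that distinct support points are separated by saturated sets.
   Saturated sets form a lattice.  Peeling off one point at a time, the greatest saturated
   subset U of the support carries a block basis J (disjoint J k within the k-th generating
   set, independent union) with card (J k) = d k; at most one support point i lies outside U,
   and adding a basis-extending block for i gives the family required by the theorem. *)

lemma subspace_subspace_sum:
  assumes "\<And>i. i \<in> I \<Longrightarrow> subspace (V i)"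
  shows "subspace (subspace_sum V I)"
  unfolding subspace_def
proof (intro conjI ballI allI)
  show "0 \<in> subspace_sum V I"
    using assms by (auto simp: subspace_sum_def subspace_0 intro!: exI[of _ "\<lambda>_. 0"])
next
  fix x y assume "x \<in> subspace_sum V I" "y \<in> subspace_sum V I"
  then obtain f g where "\<forall>i\<in>I. f i \<in> V i" "x = (\<Sum>i\<in>I. f i)" "\<forall>i\<in>I. g i \<in> V i" "y = (\<Sum>i\<in>I. g i)"
    by (auto simp: subspace_sum_def)
  then show "x + y \<in> subspace_sum V I"
    using assms by (auto simp: subspace_sum_def sum.distrib subspace_add intro!: exI[of _ "\<lambda>i. f i + g i"])
next
  fix c :: real and x assume "x \<in> subspace_sum V I"
  then obtain f where "\<forall>i\<in>I. f i \<in> V i" "x = (\<Sum>i\<in>I. f i)"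
    by (auto simp: subspace_sum_def)
  then show "c *\<^sub>R x \<in> subspace_sum V I"
    using assms by (auto simp: subspace_sum_def scaleR_sum_right subspace_scale intro!: exI[of _ "\<lambda>i. c *\<^sub>R f i"])
qed

lemma subspace_sum_span:
  fixes G :: "'n \<Rightarrow> 'a::real_vector set"
  assumes "finite X"
  shows "subspace_sum (\<lambda>i. span (G i)) X = span (\<Union>(G ` X))"
proof
  show "subspace_sum (\<lambda>i. span (G i)) X \<subseteq> span (\<Union>(G ` X))"
  proof
    fix x assume "x \<in> subspace_sum (\<lambda>i. span (G i)) X"
    then obtain f where f: "\<forall>i\<in>X. f i \<in> span (G i)" "x = (\<Sum>i\<in>X. f i)"
      by (auto simp: subspace_sum_def)
    have "f i \<in> span (\<Union>(G ` X))" if "i \<in> X" for i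
      using f(1) that span_mono[of "G i" "\<Union>(G ` X)"] by auto
    then show "x \<in> span (\<Union>(G ` X))" unfolding f(2) by (rule span_sum)
  qed
next
  have "v \<in> subspace_sum (\<lambda>i. span (G i)) X" if "i \<in> X" "v \<in> G i" for i v
  proof -
    have "v = (\<Sum>j\<in>X. if j = i then v else 0)" using assms that by (simp add: sum.delta)
    then show ?thesis using that
      by (auto simp: subspace_sum_def span_zero span_base intro!: exI[of _ "\<lambda>j. if j = i then v else 0"])
  qed
  moreover have "subspace (subspace_sum (\<lambda>i. span (G i)) X)"
    by (rule subspace_subspace_sum) (rule subspace_span)
  ultimately show "span (\<Union>(G ` X)) \<subseteq> subspace_sum (\<lambda>i. span (G i)) X"
    by (intro span_minimal) auto
qed

definition span_rank :: "('n \<Rightarrow> 'a::euclidean_space set) \<Rightarrow> 'n set \<Rightarrow> nat" where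
  "span_rank G X = dim (\<Union>(G ` X))"

lemma dim_subspace_sum_span:
  fixes G :: "'n::finite \<Rightarrow> 'a::euclidean_space set"
  shows "dim (subspace_sum (\<lambda>i. span (G i)) X) = span_rank G X"
  by (simp add: subspace_sum_span span_rank_def)

lemma span_rank_empty [simp]: "span_rank G {} = 0"
  by (simp add: span_rank_def)

lemma span_rank_mono: "A \<subseteq> B \<Longrightarrow> span_rank G A \<le> span_rank (G :: 'n \<Rightarrow> 'a::euclidean_space set) B"
  unfolding span_rank_def by (intro dim_subset) auto

text \<open>The rank function is submodular; this is Grassmann's formula
  \<open>dim (S + T) + dim (S \<inter> T) = dim S + dim T\<close>.\<close>
lemma span_rank_submodular:
  fixes G :: "'n \<Rightarrow> 'a::euclidean_space set"
  shows "span_rank G (A \<union> B) + span_rank G (A \<inter> B) \<le> span_rank G A + span_rank G B"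
proof -
  let ?S = "span (\<Union>(G ` A))" and ?T = "span (\<Union>(G ` B))"
  have "dim (\<Union>(G ` (A \<union> B))) = dim (span (\<Union>(G ` A) \<union> \<Union>(G ` B)))"
    by (simp add: image_Un)
  also have "\<dots> = dim {x + y |x y. x \<in> ?S \<and> y \<in> ?T}"
    by (simp only: span_Un)
  finally have sum_dim: "dim (\<Union>(G ` (A \<union> B))) = dim {x + y |x y. x \<in> ?S \<and> y \<in> ?T}" .
  have "\<Union>(G ` (A \<inter> B)) \<subseteq> ?S \<inter> ?T"
    using span_superset[of "\<Union>(G ` A)"] span_superset[of "\<Union>(G ` B)"] by blast
  then have "dim (\<Union>(G ` (A \<inter> B))) \<le> dim (?S \<inter> ?T)"
    by (rule dim_subset)
  moreover have "dim {x + y |x y. x \<in> ?S \<and> y \<in> ?T} + dim (?S \<inter> ?T) = dim ?S + dim ?T"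
    by (rule dim_sums_Int) auto
  ultimately show ?thesis
    unfolding span_rank_def using sum_dim by simp
qed

lemma independent_extend_spanning:
  fixes B X Y :: "'a::euclidean_space set"
  assumes indB: "independent B" and spanB: "span B = span X"
  obtains C where "C \<subseteq> Y" "B \<inter> C = {}" "independent (B \<union> C)"
    "span (B \<union> C) = span (X \<union> Y)" "card C + dim X = dim (X \<union> Y)"
proof -
  obtain B' where B': "B \<subseteq> B'" "B' \<subseteq> B \<union> Y" "independent B'" "B \<union> Y \<subseteq> span B'"
    using maximal_independent_subset_extend[of B "B \<union> Y"] indB by blast
  define C where "C = B' - B"
  have BC: "B \<union> C = B'" using B'(1) by (auto simp: C_def)
  have "span B' = span (B \<union> Y)"
    using B'(2,4) by (metis span_mono span_span subset_antisym span_superset order_trans)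
  also have "\<dots> = span (X \<union> Y)"
    by (simp add: span_Un spanB)
  finally have span_eq: "span (B \<union> C) = span (X \<union> Y)" by (simp add: BC)
  have "finite B'" using B'(3) by (rule finiteI_independent)
  then have "card B' = card B + card C"
    using BC by (metis card_Un_disjoint C_def Diff_disjoint finite_Un)
  moreover have "card B' = dim (X \<union> Y)"
    using dim_span_eq_card_independent[OF B'(3)] span_eq BC by (metis dim_span)
  moreover have "card B = dim X"
    using dim_span_eq_card_independent[OF indB] spanB by (metis dim_span)
  ultimately have "card C + dim X = dim (X \<union> Y)" by simp
  then show ?thesis
    using B'(2,3) span_eq BC by (intro that[of C]) (auto simp: C_def)
qed

definition block_basis :: "('n \<Rightarrow> 'a::euclidean_space set) \<Rightarrow> ('n \<Rightarrow> 'a set) \<Rightarrow> 'n set \<Rightarrow> bool" where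
  "block_basis G J T \<longleftrightarrow> (\<forall>k. J k \<subseteq> G k) \<and> disjoint_family J \<and> independent (\<Union>k. J k) \<and>
     span (\<Union>k. J k) = span (\<Union>(G ` T)) \<and> (\<forall>k. k \<notin> T \<longrightarrow> J k = {})"

lemma block_basis_empty: "block_basis G (\<lambda>_. {}) {}"
  by (simp add: block_basis_def disjoint_family_on_def independent_empty)

lemma block_basis_insert:
  assumes J: "block_basis G J T" and "i \<notin> T"
  obtains C where "C \<subseteq> G i" "block_basis G (J(i := C)) (insert i T)"
    "card C + span_rank G T = span_rank G (insert i T)"
proof -
  have Ji: "J i = {}" using J \<open>i \<notin> T\<close> by (simp add: block_basis_def)
  have indJ: "independent (\<Union>k. J k)" and spanJ: "span (\<Union>k. J k) = span (\<Union>(G ` T))"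
    using J by (simp_all add: block_basis_def)
  obtain C where C: "C \<subseteq> G i" "(\<Union>k. J k) \<inter> C = {}" "independent ((\<Union>k. J k) \<union> C)"
      "span ((\<Union>k. J k) \<union> C) = span (\<Union>(G ` T) \<union> G i)"
      "card C + dim (\<Union>(G ` T)) = dim (\<Union>(G ` T) \<union> G i)"
    by (rule independent_extend_spanning[OF indJ spanJ])
  have U: "(\<Union>k. (J(i := C)) k) = (\<Union>k. J k) \<union> C"
    using Ji by (auto split: if_splits)
  have "disjoint_family (J(i := C))"
    using J C(2) by (fastforce simp: block_basis_def disjoint_family_on_def)
  then have "block_basis G (J(i := C)) (insert i T)"
    using J C(1,3,4) unfolding block_basis_def U by (auto simp: Un_commute)
  moreover have "card C + span_rank G T = span_rank G (insert i T)"
    using C(5) by (simp add: span_rank_def Un_commute)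
  ultimately show ?thesis using that C(1) by blast
qed

lemma finite_union_closed_Union:
  assumes "finite H" "H \<noteq> {}" "H \<subseteq> F" "\<And>A B. A \<in> F \<Longrightarrow> B \<in> F \<Longrightarrow> A \<union> B \<in> F"
  shows "\<Union>H \<in> F"
  using assms by (induction H rule: finite_ne_induct) auto

lemma submodular_zero_sets:
  fixes f :: "'n set \<Rightarrow> real"
  assumes nonneg: "\<And>T. f T \<ge> 0"
    and submod: "\<And>A B. f (A \<union> B) + f (A \<inter> B) \<le> f A + f B"
    and "f A = 0" "f B = 0"
  shows "f (A \<union> B) = 0" "f (A \<inter> B) = 0"
  using submod[of A B] nonneg[of "A \<union> B"] nonneg[of "A \<inter> B"] assms(3,4) by linarith+

text \<open>In a lattice of sets containing \<open>{}\<close>, an element \<open>T \<noteq> {}\<close> whose points are pairwise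
  separated by the lattice covers a lattice element with exactly one point less: a maximal
  proper subset \<open>T'\<close> in the lattice cannot miss two points of \<open>T\<close>, since a set separating them
  would yield the larger element \<open>T' \<union> (S \<inter> T)\<close>.\<close>
lemma lattice_covering_step:
  fixes L :: "'n set set"
  assumes "finite T" "T \<in> L" "T \<noteq> {}" "{} \<in> L"
    and closed: "\<And>A B. A \<in> L \<Longrightarrow> B \<in> L \<Longrightarrow> A \<union> B \<in> L \<and> A \<inter> B \<in> L"
    and sep: "\<And>i j. i \<in> T \<Longrightarrow> j \<in> T \<Longrightarrow> i \<noteq> j \<Longrightarrow> \<exists>S\<in>L. i \<in> S \<longleftrightarrow> j \<notin> S"
  obtains i T' where "T' \<in> L" "i \<notin> T'" "T = insert i T'"
proof -
  have "\<exists>T'. (T' \<in> L \<and> T' \<subset> T) \<and> (\<forall>S. S \<in> L \<and> S \<subset> T \<longrightarrow> card S \<le> card T')"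
    using assms(3,4) \<open>finite T\<close>
    by (intro ex_has_greatest_nat[where b = "Suc (card T)"]) (auto simp: le_imp_less_Suc card_mono)
  then obtain T' where T': "T' \<in> L" "T' \<subset> T"
    and max: "\<And>S. S \<in> L \<Longrightarrow> S \<subset> T \<Longrightarrow> card S \<le> card T'" by blast
  have no_gap: False if "R \<in> L" "T' \<subset> R" "R \<subset> T" for R
    using max[OF that(1,3)] psubset_card_mono[OF finite_subset[OF _ \<open>finite T\<close>] that(2)] that(3)
    by auto
  have unique: "a = b" if ab: "a \<in> T - T'" "b \<in> T - T'" for a b
  proof (rule ccontr)
    assume "a \<noteq> b"
    have cut: False if "S \<in> L" "u \<in> T - T'" "v \<in> T - T'" "u \<in> S" "v \<notin> S" for S u v
      using no_gap[of "T' \<union> (S \<inter> T)"] closed[of S T] closed[of T' "S \<inter> T"] T' that assms(2)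
      by blast
    obtain S where "S \<in> L" "a \<in> S \<longleftrightarrow> b \<notin> S" using sep[of a b] ab \<open>a \<noteq> b\<close> by blast
    then show False using cut[of S a b] cut[of S b a] ab by blast
  qed
  obtain i where "i \<in> T - T'" using T'(2) by blast
  then have "T = insert i T'" using unique T'(2) by blast
  then show ?thesis using that T'(1) \<open>i \<in> T - T'\<close> by blast
qed

definition saturated :: "('n \<Rightarrow> real) \<Rightarrow> ('n \<Rightarrow> 'a::euclidean_space set) \<Rightarrow> 'n set \<Rightarrow> bool" where
  "saturated x G T \<longleftrightarrow> sum x T = real (span_rank G T)"

lemma saturated_empty: "saturated x G {}"
  by (simp add: saturated_def)

text \<open>If \<open>x(T) \<le> rank T\<close> for all \<open>T\<close>, saturated sets form a lattice, by submodularity of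
  \<open>rank - x\<close>.\<close>
lemma saturated_Un_Int:
  fixes x :: "'n::finite \<Rightarrow> real"
  assumes bound: "\<And>T. sum x T \<le> real (span_rank G T)"
    and "saturated x G A" "saturated x G B"
  shows "saturated x G (A \<union> B)" "saturated x G (A \<inter> B)"
proof -
  define f where "f T = real (span_rank G T) - sum x T" for T
  have "f (A \<union> B) + f (A \<inter> B) \<le> f A + f B" for A B
  proof -
    have "sum x (A \<union> B) + sum x (A \<inter> B) = sum x A + sum x B"
      by (rule sum.union_inter) auto
    moreover have "real (span_rank G (A \<union> B)) + real (span_rank G (A \<inter> B))
        \<le> real (span_rank G A) + real (span_rank G B)"
      using span_rank_submodular[of G A B] by linarith
    ultimately show ?thesis by (simp add: f_def)
  qed
  moreover have "f T \<ge> 0" for T using bound[of T] by (simp add: f_def)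
  moreover have "f A = 0" "f B = 0" using assms(2,3) by (simp_all add: f_def saturated_def)
  ultimately have "f (A \<union> B) = 0" "f (A \<inter> B) = 0"
    using submodular_zero_sets[of f A B] by blast+
  then show "saturated x G (A \<union> B)" "saturated x G (A \<inter> B)"
    by (simp_all add: f_def saturated_def)
qed

lemma saturated_restrict_support:
  fixes x :: "'n::finite \<Rightarrow> real"
  assumes bound: "\<And>T. sum x T \<le> real (span_rank G T)" and "saturated x G T"
  shows "saturated x G (T \<inter> {k. x k \<noteq> 0})"
proof -
  have "sum x (T \<inter> {k. x k \<noteq> 0}) = sum x T"
    by (rule sum.mono_neutral_left) auto
  moreover have "span_rank G (T \<inter> {k. x k \<noteq> 0}) \<le> span_rank G T"
    by (rule span_rank_mono) auto
  ultimately show ?thesis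
    using assms(2) bound[of "T \<inter> {k. x k \<noteq> 0}"] unfolding saturated_def by linarith
qed

text \<open>Peel
  off one point at a time with \<open>lattice_covering_step\<close>; the new block has size
  \<open>rank T - rank T' = x(T) - x(T') = x i\<close>.\<close>
lemma saturated_block_basis:
  fixes x :: "'n::finite \<Rightarrow> real"
  assumes bound: "\<And>T. sum x T \<le> real (span_rank G T)" and "saturated x G T"
    and sep: "\<And>i j. i \<in> T \<Longrightarrow> j \<in> T \<Longrightarrow> i \<noteq> j \<Longrightarrow> \<exists>S. saturated x G S \<and> (i \<in> S \<longleftrightarrow> j \<notin> S)"
  shows "\<exists>J. block_basis G J T \<and> (\<forall>k\<in>T. real (card (J k)) = x k)"
  using assms(2,3)
proof (induction "card T" arbitrary: T rule: less_induct)
  case less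
  show ?case
  proof (cases "T = {}")
    case True
    then show ?thesis using block_basis_empty by blast
  next
    case False
    have "\<exists>i T'. saturated x G T' \<and> i \<notin> T' \<and> T = insert i T'"
      by (rule lattice_covering_step[of T "{S. saturated x G S}"])
        (use False less.prems saturated_empty saturated_Un_Int[OF bound] in auto)
    then obtain i T' where T': "saturated x G T'" "i \<notin> T'" "T = insert i T'" by blast
    have "card T' < card T" using T' by simp
    then obtain J where J: "block_basis G J T'" "\<forall>k\<in>T'. real (card (J k)) = x k"
      using less.hyps[of T'] T' less.prems(2) by blast
    obtain C where C: "block_basis G (J(i := C)) T"
        "card C + span_rank G T' = span_rank G T"
      using block_basis_insert[OF J(1) T'(2)] T'(3) by metis
    have "x i = sum x T - sum x T'" using T' by simp
    also have "\<dots> = real (card C)" using less.prems(1) T'(1) C(2) by (simp add: saturated_def)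
    finally show ?thesis using C(1) J(2) T'(2,3) by (intro exI[of _ "J(i := C)"]) auto
  qed
qed

lemma saturated_cover_of_support:
  fixes x :: "'n::finite \<Rightarrow> real"
  assumes bound: "\<And>T. sum x T \<le> real (span_rank G T)"
    and sep: "\<And>i j. x i \<noteq> 0 \<Longrightarrow> x j \<noteq> 0 \<Longrightarrow> i \<noteq> j \<Longrightarrow> \<exists>S. saturated x G S \<and> (i \<in> S \<longleftrightarrow> j \<notin> S)"
  obtains U where "saturated x G U" "U \<subseteq> {k. x k \<noteq> 0}"
    "\<And>i j. x i \<noteq> 0 \<Longrightarrow> x j \<noteq> 0 \<Longrightarrow> i \<notin> U \<Longrightarrow> j \<notin> U \<Longrightarrow> i = j"
proof -
  define F where "F = {S. S \<subseteq> {k. x k \<noteq> 0} \<and> saturated x G S}"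
  have "\<Union>F \<in> F"
  proof (rule finite_union_closed_Union[OF _ _ subset_refl])
    show "finite F" by simp
    show "F \<noteq> {}" using saturated_empty[of x G] by (auto simp: F_def)
    show "A \<union> B \<in> F" if "A \<in> F" "B \<in> F" for A B
      using that saturated_Un_Int(1)[OF bound] by (auto simp: F_def)
  qed
  then have sat: "saturated x G (\<Union>F)" and supp: "\<Union>F \<subseteq> {k. x k \<noteq> 0}"
    by (simp_all add: F_def)
  have "S \<inter> {k. x k \<noteq> 0} \<subseteq> \<Union>F" if "saturated x G S" for S
  proof -
    have "S \<inter> {k. x k \<noteq> 0} \<in> F"
      using saturated_restrict_support[OF bound that] by (simp add: F_def)
    then show ?thesis by blast
  qed
  then have "i = j" if "x i \<noteq> 0" "x j \<noteq> 0" "i \<notin> \<Union>F" "j \<notin> \<Union>F" for i j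
    using sep[of i j] that by blast
  then show ?thesis using that[OF sat supp] by blast
qed

text \<open>Take a block basis of \<open>U\<close>
  and, if a support point \<open>i\<close> lies outside \<open>U\<close>, extend it by a block for \<open>i\<close>, whose size
  \<open>rank (insert i U) - rank U \<ge> x i\<close>.\<close>
lemma agreeing_block_family:
  fixes x :: "'n::finite \<Rightarrow> real" and G :: "'n \<Rightarrow> 'a::euclidean_space set"
  assumes bound: "\<And>T. sum x T \<le> real (span_rank G T)"
    and sep: "\<And>i j. x i \<noteq> 0 \<Longrightarrow> x j \<noteq> 0 \<Longrightarrow> i \<noteq> j \<Longrightarrow> \<exists>S. saturated x G S \<and> (i \<in> S \<longleftrightarrow> j \<notin> S)"
  obtains J i where "\<And>k. J k \<subseteq> G k" "disjoint_family J" "independent (\<Union>k. J k)"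
    "\<And>k. k \<noteq> i \<Longrightarrow> real (card (J k)) = x k" "x i \<le> real (card (J i))"
proof -
  obtain U where U: "saturated x G U" "U \<subseteq> {k. x k \<noteq> 0}"
    and rest: "\<And>i j. x i \<noteq> 0 \<Longrightarrow> x j \<noteq> 0 \<Longrightarrow> i \<notin> U \<Longrightarrow> j \<notin> U \<Longrightarrow> i = j"
    using saturated_cover_of_support[OF bound sep] by blast
  obtain J where J: "block_basis G J U" "\<forall>k\<in>U. real (card (J k)) = x k"
    using saturated_block_basis[OF bound U(1)] sep U(2) by blast
  show ?thesis
  proof (cases "\<exists>i0. x i0 \<noteq> 0 \<and> i0 \<notin> U")
    case False
    then have "real (card (J k)) = x k" for k
      using J by (cases "k \<in> U") (auto simp: block_basis_def)
    then show ?thesis using that[of J] J(1) by (auto simp: block_basis_def)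
  next
    case True
    then obtain i0 where i0: "x i0 \<noteq> 0" "i0 \<notin> U" by blast
    obtain C where C: "block_basis G (J(i0 := C)) (insert i0 U)"
        "card C + span_rank G U = span_rank G (insert i0 U)"
      using block_basis_insert[OF J(1) i0(2)] by metis
    have "real (card ((J(i0 := C)) k)) = x k" if "k \<noteq> i0" for k
      using J rest[OF i0(1), of k] i0(2) that by (cases "k \<in> U") (auto simp: block_basis_def)
    moreover have "x i0 \<le> real (card C)"
      using bound[of "insert i0 U"] U(1) C(2) i0(2) by (simp add: saturated_def)
    ultimately show ?thesis using that[of "J(i0 := C)" i0] C(1) by (auto simp: block_basis_def)
  qed
qed

lemma sum_Compl_add:
  fixes f :: "'n::finite \<Rightarrow> real"
  shows "sum f (- T) + sum f T = sum f UNIV"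
  using sum.subset_diff[of T UNIV f] by (simp add: Compl_eq_Diff_UNIV)

lemma sum_indicator_vec:
  "(\<Sum>k\<in>I. (\<chi> k. if k = i then (1::real) else 0) $ k) = (if i \<in> I then 1 else 0)"
  by (simp add: sum.delta)

text \<open>Extreme points of a polyhedron \<open>{y. \<forall>c\<in>C. b c \<le> a c y}\<close> with finitely many linear
  constraints: a direction \<open>z\<close> annihilated by all constraints that are tight at \<open>x\<close> is zero,
  since otherwise \<open>x \<plusminus> \<epsilon> z\<close> both lie in the polyhedron for small \<open>\<epsilon> > 0\<close>.\<close>
lemma extreme_point_tight_direction:
  fixes a :: "'c \<Rightarrow> 'v::real_vector \<Rightarrow> real"
  assumes "finite C" and lin: "\<And>c. c \<in> C \<Longrightarrow> linear (a c)"
    and ext: "x extreme_point_of {y. \<forall>c\<in>C. b c \<le> a c y}"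
    and tight: "\<And>c. c \<in> C \<Longrightarrow> a c x = b c \<Longrightarrow> a c z = 0"
  shows "z = 0"
proof (rule ccontr)
  assume "z \<noteq> 0"
  let ?P = "{y. \<forall>c\<in>C. b c \<le> a c y}"
  have xP: "x \<in> ?P" using ext by (simp add: extreme_point_of_def)
  define slack where "slack c = a c x - b c" for c
  define \<epsilon> where "\<epsilon> = Min (insert 1 ((\<lambda>c. slack c / (\<bar>a c z\<bar> + 1)) ` {c\<in>C. slack c \<noteq> 0}))"
  have slack_pos: "slack c > 0" if "c \<in> C" "slack c \<noteq> 0" for c
    using xP that by (auto simp: slack_def)
  have \<epsilon>_pos: "\<epsilon> > 0"
    unfolding \<epsilon>_def using \<open>finite C\<close> slack_pos by (auto intro!: divide_pos_pos)
  have \<epsilon>_le: "\<epsilon> * \<bar>a c z\<bar> < slack c" if "c \<in> C" "slack c \<noteq> 0" for c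
  proof -
    have "\<epsilon> \<le> slack c / (\<bar>a c z\<bar> + 1)"
      unfolding \<epsilon>_def using \<open>finite C\<close> that by (intro Min_le) auto
    then have "\<epsilon> * (\<bar>a c z\<bar> + 1) \<le> slack c" by (simp add: pos_le_divide_eq)
    then show ?thesis using \<epsilon>_pos by (simp add: algebra_simps)
  qed
  have moved_in: "x + t *\<^sub>R z \<in> ?P" if "\<bar>t\<bar> = \<epsilon>" for t
  proof (intro CollectI ballI)
    fix c assume "c \<in> C"
    have eq: "a c (x + t *\<^sub>R z) = a c x + t * a c z"
      using lin[OF \<open>c \<in> C\<close>] by (simp add: linear_add linear_scale)
    show "b c \<le> a c (x + t *\<^sub>R z)"
    proof (cases "slack c = 0")
      case True
      then show ?thesis using tight[OF \<open>c \<in> C\<close>] eq by (simp add: slack_def)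
    next
      case False
      have "\<bar>t * a c z\<bar> < slack c" using \<epsilon>_le[OF \<open>c \<in> C\<close> False] that by (simp add: abs_mult)
      then show ?thesis unfolding eq slack_def by linarith
    qed
  qed
  have "x + \<epsilon> *\<^sub>R z \<noteq> x + (- \<epsilon>) *\<^sub>R z"
    using \<open>z \<noteq> 0\<close> \<epsilon>_pos scaleR_cancel_right[of \<epsilon> z "- \<epsilon>"] by auto
  moreover have "midpoint (x + \<epsilon> *\<^sub>R z) (x + (- \<epsilon>) *\<^sub>R z) = x"
    by (simp add: midpoint_def algebra_simps flip: scaleR_add_left)
  ultimately have "x \<in> open_segment (x + \<epsilon> *\<^sub>R z) (x + (- \<epsilon>) *\<^sub>R z)"
    using midpoint_in_open_segment by metis
  then show False using ext moved_in[of \<epsilon>] moved_in[of "- \<epsilon>"] \<epsilon>_pos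
    by (auto simp: extreme_point_of_def)
qed

definition polyP_slack :: "real \<Rightarrow> ('n \<Rightarrow> 'a::euclidean_space set) \<Rightarrow> real^'n \<Rightarrow> 'n set \<Rightarrow> real" where
  "polyP_slack s G d I = (\<Sum>i\<in>I. d $ i) + real (span_rank G (- I)) - s"

lemma polyP_iff_slack:
  fixes G :: "'n::finite \<Rightarrow> 'a::euclidean_space set"
  shows "d \<in> polyP s (\<lambda>i. span (G i)) \<longleftrightarrow> (\<forall>i. d $ i \<ge> 0) \<and> (\<forall>I. polyP_slack s G d I \<ge> 0)"
  by (simp add: polyP_def polyP_slack_def dim_subspace_sum_span)

text \<open>Since \<open>I \<mapsto> rank(-I)\<close> is submodular and sums are modular, the slack is submodular.\<close>
lemma polyP_slack_submodular:
  fixes G :: "'n::finite \<Rightarrow> 'a::euclidean_space set"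
  shows "polyP_slack s G d (A \<union> B) + polyP_slack s G d (A \<inter> B) \<le> polyP_slack s G d A + polyP_slack s G d B"
proof -
  have "(\<Sum>i\<in>A \<union> B. d $ i) + (\<Sum>i\<in>A \<inter> B. d $ i) = (\<Sum>i\<in>A. d $ i) + (\<Sum>i\<in>B. d $ i)"
    by (rule sum.union_inter) auto
  moreover have "- (A \<union> B) = - A \<inter> - B" "- (A \<inter> B) = - A \<union> - B" by auto
  ultimately show ?thesis
    using span_rank_submodular[of G "- A" "- B"] by (simp add: polyP_slack_def)
qed

lemma polyP_tight_direction:
  fixes d z :: "real^'n::finite" and G :: "'n \<Rightarrow> 'a::euclidean_space set"
  assumes ext: "d extreme_point_of polyP s (\<lambda>i. span (G i))"
    and coord: "\<And>k. d $ k = 0 \<Longrightarrow> z $ k = 0"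
    and tight: "\<And>I. polyP_slack s G d I = 0 \<Longrightarrow> (\<Sum>i\<in>I. z $ i) = 0"
  shows "z = 0"
proof -
  define a :: "'n + 'n set \<Rightarrow> real^'n \<Rightarrow> real"
    where "a = case_sum (\<lambda>k y. y $ k) (\<lambda>I y. \<Sum>i\<in>I. y $ i)"
  define b :: "'n + 'n set \<Rightarrow> real"
    where "b = case_sum (\<lambda>_. 0) (\<lambda>I. s - real (span_rank G (- I)))"
  have "polyP s (\<lambda>i. span (G i)) = {y. \<forall>c\<in>UNIV. b c \<le> a c y}"
    by (simp add: polyP_def dim_subspace_sum_span a_def b_def split_sum_all diff_le_eq add.commute)
  moreover have "linear (a c)" for c
    using bounded_linear.linear[OF bounded_linear_vec_nth]
    by (cases c) (auto simp: a_def intro!: linear_compose_sum)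
  moreover have "a c z = 0" if "a c d = b c" for c
    using that coord tight by (cases c) (auto simp: a_def b_def polyP_slack_def)
  ultimately show "z = 0"
    using ext by (intro extreme_point_tight_direction[of UNIV a d b z]) auto
qed

text \<open>At a vertex, every coordinate in the support of \<open>d\<close> occurs in some tight constraint;
  otherwise the unit vector of that coordinate would be an admissible direction.\<close>
lemma extreme_point_support_covered:
  fixes G :: "'n::finite \<Rightarrow> 'a::euclidean_space set"
  assumes ext: "d extreme_point_of polyP s (\<lambda>i. span (G i))" and "d $ i \<noteq> 0"
  shows "\<exists>I. polyP_slack s G d I = 0 \<and> i \<in> I"
proof (rule ccontr)
  assume uncovered: "\<nexists>I. polyP_slack s G d I = 0 \<and> i \<in> I"
  define e :: "real^'n" where "e = (\<chi> k. if k = i then 1 else 0)"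
  have "e = 0"
  proof (rule polyP_tight_direction[OF ext])
    show "e $ k = 0" if "d $ k = 0" for k using that \<open>d $ i \<noteq> 0\<close> by (auto simp: e_def)
    show "(\<Sum>k\<in>I. e $ k) = 0" if "polyP_slack s G d I = 0" for I
      using that uncovered by (auto simp: e_def sum_indicator_vec)
  qed
  moreover have "e $ i = 1" by (simp add: e_def)
  ultimately show False by simp
qed

text \<open>A vertex has total mass exactly \<open>s\<close>: the union \<open>W\<close> of all tight constraints is tight and
  contains the support, so \<open>\<Sum>d = d(W) = s - rank(-W) \<le> s\<close>, while the constraint for
  \<open>I = UNIV\<close> gives \<open>\<Sum>d \<ge> s\<close>.\<close>
lemma extreme_point_total:
  fixes G :: "'n::finite \<Rightarrow> 'a::euclidean_space set"
  assumes "s \<ge> 0" and ext: "d extreme_point_of polyP s (\<lambda>i. span (G i))"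
  shows "(\<Sum>i\<in>UNIV. d $ i) = s"
proof -
  have "d \<in> polyP s (\<lambda>i. span (G i))" using ext by (simp add: extreme_point_of_def)
  then have nonneg: "polyP_slack s G d I \<ge> 0" for I by (simp add: polyP_iff_slack)
  have lower: "(\<Sum>i\<in>UNIV. d $ i) \<ge> s" using nonneg[of UNIV] by (simp add: polyP_slack_def)
  show ?thesis
  proof (cases "\<forall>i. d $ i = 0")
    case True
    then show ?thesis using lower \<open>s \<ge> 0\<close> by simp
  next
    case False
    define Z where "Z = {I. polyP_slack s G d I = 0}"
    have "\<Union>Z \<in> Z"
    proof (rule finite_union_closed_Union[OF _ _ subset_refl])
      show "finite Z" by simp
      show "Z \<noteq> {}" using False extreme_point_support_covered[OF ext] by (auto simp: Z_def)
      show "A \<union> B \<in> Z" if "A \<in> Z" "B \<in> Z" for A B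
        using that submodular_zero_sets(1)[OF nonneg polyP_slack_submodular] by (simp add: Z_def)
    qed
    moreover have "(\<Sum>i\<in>UNIV. d $ i) = (\<Sum>i\<in>\<Union>Z. d $ i)"
      using extreme_point_support_covered[OF ext]
      by (intro sum.mono_neutral_right) (auto simp: Z_def)
    ultimately show ?thesis using lower by (simp add: polyP_slack_def Z_def)
  qed
qed

text \<open>Consequently a vertex satisfies \<open>d(T) \<le> rank(T)\<close> for all \<open>T\<close> (the constraint for \<open>-T\<close>),
  and the tight constraints are exactly the complements of the saturated sets.\<close>
lemma extreme_point_rank_bound:
  fixes G :: "'n::finite \<Rightarrow> 'a::euclidean_space set"
  assumes "s \<ge> 0" and ext: "d extreme_point_of polyP s (\<lambda>i. span (G i))"
  shows "(\<Sum>i\<in>T. d $ i) \<le> real (span_rank G T)"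
proof -
  have "d \<in> polyP s (\<lambda>i. span (G i))" using ext by (simp add: extreme_point_of_def)
  then have "polyP_slack s G d (- T) \<ge> 0" by (simp add: polyP_iff_slack)
  then show ?thesis
    using extreme_point_total[OF assms] sum_Compl_add[of "\<lambda>i. d $ i" T]
    by (simp add: polyP_slack_def)
qed

lemma extreme_point_tight_iff_saturated:
  fixes G :: "'n::finite \<Rightarrow> 'a::euclidean_space set"
  assumes "s \<ge> 0" and ext: "d extreme_point_of polyP s (\<lambda>i. span (G i))"
  shows "polyP_slack s G d I = 0 \<longleftrightarrow> saturated (\<lambda>k. d $ k) G (- I)"
  using extreme_point_total[OF assms] sum_Compl_add[of "\<lambda>k. d $ k" I]
  by (auto simp: polyP_slack_def saturated_def)

text \<open>Two distinct support coordinates \<open>i, j\<close> of a vertex are separated by a saturated set: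
  otherwise \<open>e\<^sub>i - e\<^sub>j\<close> would be an admissible direction.\<close>
lemma extreme_point_separation:
  fixes G :: "'n::finite \<Rightarrow> 'a::euclidean_space set"
  assumes "s \<ge> 0" and ext: "d extreme_point_of polyP s (\<lambda>i. span (G i))"
    and "d $ i \<noteq> 0" "d $ j \<noteq> 0" "i \<noteq> j"
  shows "\<exists>S. saturated (\<lambda>k. d $ k) G S \<and> (i \<in> S \<longleftrightarrow> j \<notin> S)"
proof (rule ccontr)
  assume insep: "\<nexists>S. saturated (\<lambda>k. d $ k) G S \<and> (i \<in> S \<longleftrightarrow> j \<notin> S)"
  define z :: "real^'n" where "z = (\<chi> k. if k = i then 1 else 0) - (\<chi> k. if k = j then 1 else 0)"
  have z_sum: "(\<Sum>k\<in>I. z $ k) = (if i \<in> I then 1 else 0) - (if j \<in> I then 1 else 0)" for I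
    by (simp add: z_def sum_subtractf sum_indicator_vec)
  have "z = 0"
  proof (rule polyP_tight_direction[OF ext])
    show "z $ k = 0" if "d $ k = 0" for k using that assms(3,4) by (auto simp: z_def)
    show "(\<Sum>k\<in>I. z $ k) = 0" if "polyP_slack s G d I = 0" for I
    proof -
      have "saturated (\<lambda>k. d $ k) G (- I)"
        using that extreme_point_tight_iff_saturated[OF assms(1,2)] by blast
      then have "i \<in> I \<longleftrightarrow> j \<in> I" using insep by blast
      then show ?thesis by (simp add: z_sum)
    qed
  qed
  moreover have "(\<Sum>k\<in>{i}. z $ k) = 1" using \<open>i \<noteq> j\<close> by (simp only: z_sum) simp
  ultimately show False by simp
qed

lemma JJbar_of_agreeing_family:
  fixes d :: "real^'n::finite" and G :: "'n \<Rightarrow> 'a::euclidean_space set"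
  assumes total: "(\<Sum>k\<in>UNIV. d $ k) = s" and nonneg: "\<And>k. d $ k \<ge> 0"
    and J: "\<And>k. J k \<subseteq> G k" "disjoint_family J" "independent (\<Union>k. J k)"
    and agree: "\<And>k. k \<noteq> i \<Longrightarrow> real (card (J k)) = d $ k"
    and excess: "d $ i \<le> real (card (J i))"
  shows "(J, i) \<in> JJbar s G \<and> d = Jhat s J i"
proof -
  have "(\<Sum>k\<in>UNIV. real (card (J k))) = (\<Sum>k\<in>UNIV. d $ k + (if k = i then real (card (J i)) - d $ i else 0))"
    by (intro sum.cong) (auto simp: agree)
  then have card_total: "real (\<Sum>k\<in>UNIV. card (J k)) = s + (real (card (J i)) - d $ i)"
    using total by (simp add: sum.distrib of_nat_sum)
  have Jhat: "Jhat s J i = d"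
    using card_total agree by (auto simp: Jhat_def vec_eq_iff)
  have "inj_on snd (SIGMA k:UNIV. J k)"
    using J(2) by (auto simp: inj_on_def disjoint_family_on_def)
  then have "J \<in> JJ s G"
    using J card_total excess by (simp add: JJ_def)
  then show ?thesis using Jhat nonneg by (simp add: JJbar_def)
qed

text \<open>The theorem: the vertex \<open>d\<close> is realised by the block family built above.\<close>
theorem mainTheorem4:
  fixes s :: real
    and G :: "'n::finite \<Rightarrow> 'a::euclidean_space set"
    and d :: "real^'n"
  assumes "s \<ge> 0"
    and "\<And>i. finite (G i)"
    and "d extreme_point_of polyP s (\<lambda>i. span (G i))"
  shows "\<exists>J i. (J, i) \<in> JJbar s G \<and> d = Jhat s J i"
proof -
  have nonneg: "d $ k \<ge> 0" for k
    using assms(3) by (simp add: extreme_point_of_def polyP_def)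
  obtain J i where "\<And>k. J k \<subseteq> G k" "disjoint_family J" "independent (\<Union>k. J k)"
      "\<And>k. k \<noteq> i \<Longrightarrow> real (card (J k)) = d $ k" "d $ i \<le> real (card (J i))"
    using agreeing_block_family[of "\<lambda>k. d $ k" G]
      extreme_point_rank_bound[OF assms(1,3)] extreme_point_separation[OF assms(1,3)]
    by blast
  then have "(J, i) \<in> JJbar s G \<and> d = Jhat s J i"
    using JJbar_of_agreeing_family extreme_point_total[OF assms(1,3)] nonneg by blast
  then show ?thesis by blast
qed

end
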